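(* Let $n\ge1$ and define $\phi(x_j)=I_{n+1}+E_{j+1,j}$ and $\phi(y_j)=I_{n+1}+E_{j,j+1}$ in $\mathrm{GL}_{n+1}(\mathbb{F}_2)$ for $1\le j\le n$. Then the map $\phi$ on $\{x_1,\dots,x_n,y_1,\dots,y_n\}$ extends to a group homomorphism $\phi\colon\langle A_{2,n}\rangle\to\mathrm{GL}_{n+1}(\mathbb{F}_2)$.
   Context: $E_{i,j}$ is the matrix with $1$ in row $i$, column $j$ and $0$ elsewhere. The group $\langle A_{2,n}\rangle$ has generators $X=\{x_1,\dots,x_n,y_1,\dots,y_n\}$ and defining relations: $z^2=e$ for all $z\in X$; $(x_ix_{i+1})^4=(y_iy_{i+1})^4=e$ for $1\le i\le n-1$; $(x_iy_i)^3=e$ for $1\le i\le n$; $(zt)^2=e$ for every other pair of distinct $z,t\in X$; $(x_ix_{i+1}y_i)^3=(x_ix_{i+1}y_{i+1})^3=(x_iy_iy_{i+1})^3=(x_{i+1}y_iy_{i+1})^3=e$ for $1\le i\le n-1$; and $(x_ix_{i+1}x_{i+2})^4=(y_iy_{i+1}y_{i+2})^4=e$ for $1\le i\le n-2$. *)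

theory Defs
  imports "HOL-Algebra.Group" "HOL-Library.Z2" "Jordan_Normal_Form.Matrix"
begin

text \<open>Letters of a word: a generator together with a flag (True = generator,
False = its formal inverse).\<close>

type_synonym 'g letter = "'g \<times> bool"

inductive_set pres_rel :: "'g set \<Rightarrow> 'g letter list set \<Rightarrow> ('g letter list \<times> 'g letter list) set"
  for X :: "'g set" and R :: "'g letter list set" where
  pres_refl: "w \<in> lists (X \<times> UNIV) \<Longrightarrow> (w, w) \<in> pres_rel X R"
| pres_sym: "(u, v) \<in> pres_rel X R \<Longrightarrow> (v, u) \<in> pres_rel X R"
| pres_trans: "(u, v) \<in> pres_rel X R \<Longrightarrow> (v, w) \<in> pres_rel X R \<Longrightarrow> (u, w) \<in> pres_rel X R"
| pres_cancel: "x \<in> X \<Longrightarrow> ([(x, b), (x, \<not> b)], []) \<in> pres_rel X R"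
| pres_relator: "r \<in> R \<Longrightarrow> (r, []) \<in> pres_rel X R"
| pres_cong: "(u, v) \<in> pres_rel X R \<Longrightarrow> a \<in> lists (X \<times> UNIV) \<Longrightarrow> b \<in> lists (X \<times> UNIV)
      \<Longrightarrow> (a @ u @ b, a @ v @ b) \<in> pres_rel X R"

definition presented_group :: "'g set \<Rightarrow> 'g letter list set \<Rightarrow> 'g letter list set monoid" where
  "presented_group X R = \<lparr>
     carrier = lists (X \<times> UNIV) // pres_rel X R,
     mult = (\<lambda>A B. pres_rel X R `` {a @ b | a b. a \<in> A \<and> b \<in> B}),
     one = pres_rel X R `` {[]} \<rparr>"

definition gen_class :: "'g set \<Rightarrow> 'g letter list set \<Rightarrow> 'g \<Rightarrow> 'g letter list set" where
  "gen_class X R x = pres_rel X R `` {[(x, True)]}"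

text \<open>Generators: \<open>Inl j\<close> stands for \<open>x_j\<close>, \<open>Inr j\<close> for \<open>y_j\<close>, \<open>1 \<le> j \<le> n\<close>.\<close>

definition A2_gens :: "nat \<Rightarrow> (nat + nat) set" where
  "A2_gens n = Inl ` {1..n} \<union> Inr ` {1..n}"

definition lt :: "nat + nat \<Rightarrow> (nat + nat) letter" where
  "lt z = (z, True)"

definition wpow :: "'a list \<Rightarrow> nat \<Rightarrow> 'a list" where
  "wpow w k = concat (replicate k w)"

definition A2_special_pair :: "nat \<Rightarrow> nat + nat \<Rightarrow> nat + nat \<Rightarrow> bool" where
  "A2_special_pair n z t \<longleftrightarrow>
     (\<exists>i. 1 \<le> i \<and> i \<le> n - 1 \<and>
        ({z, t} = {Inl i, Inl (i+1)} \<or> {z, t} = {Inr i, Inr (i+1)}))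
   \<or> (\<exists>i. 1 \<le> i \<and> i \<le> n \<and> {z, t} = {Inl i, Inr i})"

definition A2_relators :: "nat \<Rightarrow> (nat + nat) letter list set" where
  "A2_relators n =
     {wpow [lt z] 2 | z. z \<in> A2_gens n}
   \<union> {wpow [lt (Inl i), lt (Inl (i+1))] 4 | i. 1 \<le> i \<and> i \<le> n - 1}
   \<union> {wpow [lt (Inr i), lt (Inr (i+1))] 4 | i. 1 \<le> i \<and> i \<le> n - 1}
   \<union> {wpow [lt (Inl i), lt (Inr i)] 3 | i. 1 \<le> i \<and> i \<le> n}
   \<union> {wpow [lt z, lt t] 2 | z t. z \<in> A2_gens n \<and> t \<in> A2_gens n \<and> z \<noteq> t
        \<and> \<not> A2_special_pair n z t}
   \<union> {wpow [lt (Inl i), lt (Inl (i+1)), lt (Inr i)] 3 | i. 1 \<le> i \<and> i \<le> n - 1}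
   \<union> {wpow [lt (Inl i), lt (Inl (i+1)), lt (Inr (i+1))] 3 | i. 1 \<le> i \<and> i \<le> n - 1}
   \<union> {wpow [lt (Inl i), lt (Inr i), lt (Inr (i+1))] 3 | i. 1 \<le> i \<and> i \<le> n - 1}
   \<union> {wpow [lt (Inl (i+1)), lt (Inr i), lt (Inr (i+1))] 3 | i. 1 \<le> i \<and> i \<le> n - 1}
   \<union> {wpow [lt (Inl i), lt (Inl (i+1)), lt (Inl (i+2))] 4 | i. 1 \<le> i \<and> i \<le> n - 2}
   \<union> {wpow [lt (Inr i), lt (Inr (i+1)), lt (Inr (i+2))] 4 | i. 1 \<le> i \<and> i \<le> n - 2}"

definition A2_group :: "nat \<Rightarrow> (nat + nat) letter list set monoid" where
  "A2_group n = presented_group (A2_gens n) (A2_relators n)"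

text \<open>GL_m(F_2): the units of the ring of m\<times>m matrices over \<open>bit\<close> (= F_2).\<close>

definition GL2 :: "nat \<Rightarrow> bit mat monoid" where
  "GL2 m = units_of (ring_mat TYPE(bit) m ())"

text \<open>Elementary matrix \<open>E_{i,j}\<close> of size m, with 1-based indices.\<close>

definition E_mat :: "nat \<Rightarrow> nat \<Rightarrow> nat \<Rightarrow> bit mat" where
  "E_mat m i j = mat m m (\<lambda>(a, b). if a = i - 1 \<and> b = j - 1 then 1 else 0)"

definition phi_gen :: "nat \<Rightarrow> nat + nat \<Rightarrow> bit mat" where
  "phi_gen n z = (case z of
      Inl j \<Rightarrow> 1\<^sub>m (n+1) + E_mat (n+1) (j+1) j
    | Inr j \<Rightarrow> 1\<^sub>m (n+1) + E_mat (n+1) j (j+1))"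

end

theory Submission
  imports Defs
begin

text \<open>By von Dyck's theorem it suffices to check that the matrices \<open>\<phi>(z)\<close> are
invertible and satisfy every defining relator.  Each \<open>\<phi>(z)\<close> is a transvection
\<open>I + E\<^sub>a\<^sub>b\<close> (\<open>a \<noteq> b\<close>), an involution over \<open>F\<^sub>2\<close>.  Two transvections \<open>I + E\<^sub>a\<^sub>b\<close>,
\<open>I + E\<^sub>c\<^sub>d\<close> commute when \<open>b \<noteq> c\<close> and \<open>a \<noteq> d\<close>, which covers all relators
\<open>(zt)\<^sup>2\<close>; the remaining relators involve at most three consecutive indices and
are verified by computing with row operations, since left multiplication by
\<open>I + E\<^sub>a\<^sub>b\<close> adds row \<open>b\<close> to row \<open>a\<close>.\<close>

definition eval_word :: "('a, 'c) monoid_scheme \<Rightarrow> 'g set \<Rightarrow> ('g \<Rightarrow> 'a) \<Rightarrow> 'g letter list \<Rightarrow> 'a" where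
  "eval_word G X f w =
     foldr (\<lambda>(x, b) acc. (if x \<in> X then (if b then f x else inv\<^bsub>G\<^esub> f x) else \<one>\<^bsub>G\<^esub>) \<otimes>\<^bsub>G\<^esub> acc) w \<one>\<^bsub>G\<^esub>"

lemma eval_word_Nil [simp]: "eval_word G X f [] = \<one>\<^bsub>G\<^esub>"
  by (simp add: eval_word_def)

lemma eval_word_Cons [simp]:
  "eval_word G X f ((x, b) # w) =
     (if x \<in> X then (if b then f x else inv\<^bsub>G\<^esub> f x) else \<one>\<^bsub>G\<^esub>) \<otimes>\<^bsub>G\<^esub> eval_word G X f w"
  by (simp add: eval_word_def)

context group
begin

lemma eval_word_closed: "f ` X \<subseteq> carrier G \<Longrightarrow> eval_word G X f w \<in> carrier G"
  by (induction w) (auto simp: image_subset_iff)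

lemma eval_word_append:
  "f ` X \<subseteq> carrier G \<Longrightarrow> eval_word G X f (u @ v) = eval_word G X f u \<otimes> eval_word G X f v"
  by (induction u) (auto simp: eval_word_closed m_assoc image_subset_iff)

lemma eval_word_pres_rel:
  assumes fX: "f ` X \<subseteq> carrier G" and R: "\<And>r. r \<in> R \<Longrightarrow> eval_word G X f r = \<one>"
  shows "(u, v) \<in> pres_rel X R \<Longrightarrow> eval_word G X f u = eval_word G X f v"
proof (induction rule: pres_rel.induct)
  case (pres_cancel x b)
  then show ?case using fX by (cases b) auto
next
  case (pres_relator r)
  then show ?case using R by simp
next
  case (pres_cong u v a b)
  then show ?case by (simp add: eval_word_append[OF fX])
qed auto

lemma presented_group_hom_exists:
  assumes fX: "f ` X \<subseteq> carrier G" and R: "\<And>r. r \<in> R \<Longrightarrow> eval_word G X f r = \<one>"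
  shows "\<exists>h. h \<in> hom (presented_group X R) G \<and> (\<forall>x\<in>X. h (gen_class X R x) = f x)"
proof -
  let ?rel = "pres_rel X R"
  let ?ev = "eval_word G X f"
  define h where "h A = ?ev (SOME w. w \<in> A)" for A
  have h_eq: "h A = c" if "a \<in> A" "\<And>w. w \<in> A \<Longrightarrow> ?ev w = c" for A a c
    unfolding h_def by (rule that(2), rule someI[of _ a], rule that(1))
  have class_self: "a \<in> ?rel `` {a}" if "a \<in> lists (X \<times> UNIV)" for a
    using that by (auto intro: pres_refl)
  have class_ev: "?ev w = ?ev a" if "w \<in> ?rel `` {a}" for a w
    using that eval_word_pres_rel[OF fX R] by auto
  have h_class: "h (?rel `` {a}) = ?ev a" if "a \<in> lists (X \<times> UNIV)" for a
    using h_eq class_self[OF that] class_ev by blast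
  have carrier_E: "\<exists>a \<in> lists (X \<times> UNIV). A = ?rel `` {a}"
    if "A \<in> carrier (presented_group X R)" for A
    using that by (auto simp: presented_group_def quotient_def)
  show ?thesis
  proof (intro exI conjI ballI)
    show "h \<in> hom (presented_group X R) G"
    proof (rule homI)
      fix A assume "A \<in> carrier (presented_group X R)"
      then show "h A \<in> carrier G"
        using carrier_E h_class eval_word_closed[OF fX] by metis
    next
      fix A B
      assume "A \<in> carrier (presented_group X R)" "B \<in> carrier (presented_group X R)"
      then obtain a b where a: "a \<in> lists (X \<times> UNIV)" "A = ?rel `` {a}"
        and b: "b \<in> lists (X \<times> UNIV)" "B = ?rel `` {b}"
        using carrier_E by metis
      have "h (A \<otimes>\<^bsub>presented_group X R\<^esub> B) = ?ev a \<otimes> ?ev b"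
      proof (rule h_eq)
        show "a @ b \<in> A \<otimes>\<^bsub>presented_group X R\<^esub> B"
          using class_self[OF a(1)] class_self[OF b(1)] pres_refl[of "a @ b"] a b
          by (auto simp: presented_group_def)
      next
        fix w assume "w \<in> A \<otimes>\<^bsub>presented_group X R\<^esub> B"
        then obtain a' b' where "a' \<in> A" "b' \<in> B" "(a' @ b', w) \<in> ?rel"
          by (auto simp: presented_group_def)
        then show "?ev w = ?ev a \<otimes> ?ev b"
          using eval_word_pres_rel[OF fX R] class_ev a b by (metis eval_word_append[OF fX])
      qed
      then show "h (A \<otimes>\<^bsub>presented_group X R\<^esub> B) = h A \<otimes> h B"
        using h_class a b by simp
    qed
  next
    fix x assume "x \<in> X"
    then show "h (gen_class X R x) = f x"
      using h_class[of "[(x, True)]"] fX by (auto simp: gen_class_def)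
  qed
qed

lemma eval_word_commuting_involutions:
  assumes "f ` X \<subseteq> carrier G" "z \<in> X" "t \<in> X"
    and "f z \<otimes> f z = \<one>" "f t \<otimes> f t = \<one>" "f z \<otimes> f t = f t \<otimes> f z"
  shows "eval_word G X f [(z, True), (t, True), (z, True), (t, True)] = \<one>"
proof -
  have "f z \<in> carrier G" "f t \<in> carrier G" using assms(1-3) by auto
  then have "f z \<otimes> (f t \<otimes> (f z \<otimes> f t)) = f z \<otimes> ((f z \<otimes> f t) \<otimes> f t)"
    using assms(6) by (simp add: m_assoc)
  also have "\<dots> = \<one>"
    using \<open>f z \<in> carrier G\<close> \<open>f t \<in> carrier G\<close> assms(4,5) by (simp add: m_assoc[symmetric])
  finally show ?thesis using assms(2,3) \<open>f t \<in> carrier G\<close> by simp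
qed

end

definition row_add :: "nat \<Rightarrow> nat \<Rightarrow> nat \<Rightarrow> bit mat \<Rightarrow> bit mat" where
  "row_add m a b M = mat m m (\<lambda>(r, c). M $$ (r, c) + (if r = a then M $$ (b, c) else 0))"

lemma row_add_index [simp]:
  "r < m \<Longrightarrow> c < m \<Longrightarrow> row_add m a b M $$ (r, c) = M $$ (r, c) + (if r = a then M $$ (b, c) else 0)"
  by (simp add: row_add_def)

lemma row_add_carrier [simp]: "row_add m a b M \<in> carrier_mat m m"
  and row_add_dim [simp]: "dim_row (row_add m a b M) = m" "dim_col (row_add m a b M) = m"
  by (simp_all add: row_add_def)

lemma E_mat_carrier [simp]: "E_mat m i j \<in> carrier_mat m m"
  and E_mat_dim [simp]: "dim_row (E_mat m i j) = m" "dim_col (E_mat m i j) = m"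
  by (simp_all add: E_mat_def)

text \<open>\<open>E_mat\<close> uses 1-based indices, \<open>row_add\<close> 0-based ones.\<close>

lemma transvection_mult:
  assumes "1 \<le> i" "i \<le> m" "1 \<le> j" "j \<le> m" "M \<in> carrier_mat m m"
  shows "(1\<^sub>m m + E_mat m i j) * M = row_add m (i - 1) (j - 1) M"
proof (rule eq_matI)
  fix r c assume "r < dim_row (row_add m (i - 1) (j - 1) M)" "c < dim_col (row_add m (i - 1) (j - 1) M)"
  then have r: "r < m" and c: "c < m" by auto
  have "((1\<^sub>m m + E_mat m i j) * M) $$ (r, c) =
        (\<Sum>k\<in>{0..<m}. (1\<^sub>m m + E_mat m i j) $$ (r, k) * M $$ (k, c))"
    using r c assms(5)
    by (auto simp: scalar_prod_def simp del: add_bit_eq_xor mult_bit_eq_and intro!: sum.cong)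
  also have "\<dots> = (\<Sum>k\<in>{0..<m}. (if k = r then M $$ (k, c) else 0)
                    + (if k = j - 1 then (if r = i - 1 then M $$ (k, c) else 0) else 0))"
    by (rule sum.cong) (use r in \<open>auto simp: E_mat_def\<close>)
  also have "\<dots> = M $$ (r, c) + (if r = i - 1 then M $$ (j - 1, c) else 0)"
    using r assms by (simp only: sum.distrib sum.delta finite_atLeastLessThan) simp
  finally show "((1\<^sub>m m + E_mat m i j) * M) $$ (r, c) = row_add m (i - 1) (j - 1) M $$ (r, c)"
    using r c by simp
qed (use assms in auto)

lemma transvection_commute:
  assumes "1 \<le> a" "a \<le> m" "1 \<le> b" "b \<le> m" "1 \<le> c" "c \<le> m" "1 \<le> d" "d \<le> m"
    and "b \<noteq> c" "a \<noteq> d"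
  shows "(1\<^sub>m m + E_mat m a b) * (1\<^sub>m m + E_mat m c d) = (1\<^sub>m m + E_mat m c d) * (1\<^sub>m m + E_mat m a b)"
  using assms by (simp add: transvection_mult) (rule eq_matI; auto simp: E_mat_def)

lemma GL2_group: "group (GL2 m)"
  unfolding GL2_def by (rule monoid.units_group[OF ring.is_monoid[OF ring_mat]])

lemma GL2_simps [simp]: "mult (GL2 m) = (*)" "one (GL2 m) = 1\<^sub>m m"
  by (simp_all add: GL2_def units_of_mult units_of_one ring_mat_simps)

lemma phi_gen_carrier [simp]: "phi_gen n z \<in> carrier_mat (Suc n) (Suc n)"
  by (cases z) (auto simp: phi_gen_def)

lemma phi_gen_Inl_mult [simp]:
  "1 \<le> j \<Longrightarrow> j \<le> n \<Longrightarrow> M \<in> carrier_mat (Suc n) (Suc n) \<Longrightarrow>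
   phi_gen n (Inl j) * M = row_add (Suc n) j (j - 1) M"
  by (simp add: phi_gen_def transvection_mult)

lemma phi_gen_Inr_mult [simp]:
  "1 \<le> j \<Longrightarrow> j \<le> n \<Longrightarrow> M \<in> carrier_mat (Suc n) (Suc n) \<Longrightarrow>
   phi_gen n (Inr j) * M = row_add (Suc n) (j - 1) j M"
  by (simp add: phi_gen_def transvection_mult)

lemma phi_gen_involution:
  assumes "z \<in> A2_gens n"
  shows "phi_gen n z * phi_gen n z = 1\<^sub>m (Suc n)"
proof -
  have "phi_gen n z * phi_gen n z = phi_gen n z * (phi_gen n z * 1\<^sub>m (Suc n))"
    using phi_gen_carrier[of n z] by (metis right_mult_one_mat)
  also have "\<dots> = 1\<^sub>m (Suc n)"
    using assms by (auto simp: A2_gens_def) (rule eq_matI; auto)+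
  finally show ?thesis .
qed

lemma phi_gen_in_GL2: "z \<in> A2_gens n \<Longrightarrow> phi_gen n z \<in> carrier (GL2 (n + 1))"
  unfolding GL2_def units_of_carrier Units_def
  using phi_gen_involution[of z n] by (auto simp: ring_mat_simps)

lemma A2_special_pair_sym: "A2_special_pair n z t \<longleftrightarrow> A2_special_pair n t z"
  unfolding A2_special_pair_def by (simp add: insert_commute)

lemma A2_special_pairI:
  "1 \<le> i \<Longrightarrow> i + 1 \<le> n \<Longrightarrow> A2_special_pair n (Inl i) (Inl (i + 1))"
  "1 \<le> i \<Longrightarrow> i + 1 \<le> n \<Longrightarrow> A2_special_pair n (Inr i) (Inr (i + 1))"
  "1 \<le> i \<Longrightarrow> i \<le> n \<Longrightarrow> A2_special_pair n (Inl i) (Inr i)"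
  unfolding A2_special_pair_def by auto

lemma phi_gen_commute:
  assumes "z \<in> A2_gens n" "t \<in> A2_gens n" "z \<noteq> t" "\<not> A2_special_pair n z t"
  shows "phi_gen n z * phi_gen n t = phi_gen n t * phi_gen n z"
proof -
  have "\<not> A2_special_pair n t z" using assms(4) A2_special_pair_sym by metis
  then show ?thesis
    using assms A2_special_pairI[of _ n] unfolding phi_gen_def A2_gens_def
    by (cases z; cases t) (auto intro!: transvection_commute)
qed

abbreviation phi_word :: "nat \<Rightarrow> (nat + nat) letter list \<Rightarrow> bit mat" where
  "phi_word n \<equiv> eval_word (GL2 (n + 1)) (A2_gens n) (phi_gen n)"

lemma phi_word_square:
  assumes "z \<in> A2_gens n"
  shows "phi_word n (wpow [lt z] 2) = \<one>\<^bsub>GL2 (n + 1)\<^esub>"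
proof -
  have "phi_gen n z * 1\<^sub>m (Suc n) = phi_gen n z"
    using phi_gen_carrier[of n z] by (rule right_mult_one_mat)
  then show ?thesis
    using assms phi_gen_involution[OF assms] by (auto simp: wpow_def lt_def numeral_eq_Suc)
qed

lemma phi_word_commuting_square:
  assumes "z \<in> A2_gens n" "t \<in> A2_gens n" "z \<noteq> t" "\<not> A2_special_pair n z t"
  shows "phi_word n (wpow [lt z, lt t] 2) = \<one>\<^bsub>GL2 (n + 1)\<^esub>"
proof -
  interpret GL: group "GL2 (n + 1)" by (rule GL2_group)
  have "phi_gen n ` A2_gens n \<subseteq> carrier (GL2 (n + 1))" using phi_gen_in_GL2 by blast
  then show ?thesis
    using GL.eval_word_commuting_involutions[of "phi_gen n" "A2_gens n" z t] assms
      phi_gen_involution phi_gen_commute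
    by (simp add: wpow_def lt_def numeral_eq_Suc)
qed

text \<open>The remaining relators are checked entry by entry after turning every
product into row operations; the index is written as \<open>Suc p\<close> so that the
0-based row indices \<open>Suc p - 1\<close> simplify.\<close>

lemma phi_word_relator_one_index:
  assumes "1 \<le> i" "i \<le> n"
  shows "phi_word n (wpow [lt (Inl i), lt (Inr i)] 3) = \<one>\<^bsub>GL2 (n + 1)\<^esub>"
proof -
  obtain p where "i = Suc p" using assms by (cases i) auto
  then show ?thesis using assms
    by (simp add: wpow_def lt_def A2_gens_def numeral_eq_Suc del: right_mult_one_mat')
      (rule eq_matI; auto simp: algebra_simps)
qed

lemma phi_word_relators_two_indices:
  assumes "1 \<le> i" "i \<le> n - 1"
  shows "phi_word n (wpow [lt (Inl i), lt (Inl (i + 1))] 4) = \<one>\<^bsub>GL2 (n + 1)\<^esub>"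
    and "phi_word n (wpow [lt (Inr i), lt (Inr (i + 1))] 4) = \<one>\<^bsub>GL2 (n + 1)\<^esub>"
    and "phi_word n (wpow [lt (Inl i), lt (Inl (i + 1)), lt (Inr i)] 3) = \<one>\<^bsub>GL2 (n + 1)\<^esub>"
    and "phi_word n (wpow [lt (Inl i), lt (Inl (i + 1)), lt (Inr (i + 1))] 3) = \<one>\<^bsub>GL2 (n + 1)\<^esub>"
    and "phi_word n (wpow [lt (Inl i), lt (Inr i), lt (Inr (i + 1))] 3) = \<one>\<^bsub>GL2 (n + 1)\<^esub>"
    and "phi_word n (wpow [lt (Inl (i + 1)), lt (Inr i), lt (Inr (i + 1))] 3) = \<one>\<^bsub>GL2 (n + 1)\<^esub>"
proof -
  obtain p where "i = Suc p" using assms by (cases i) auto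
  with assms show "phi_word n (wpow [lt (Inl i), lt (Inl (i + 1))] 4) = \<one>\<^bsub>GL2 (n + 1)\<^esub>"
    and "phi_word n (wpow [lt (Inr i), lt (Inr (i + 1))] 4) = \<one>\<^bsub>GL2 (n + 1)\<^esub>"
    and "phi_word n (wpow [lt (Inl i), lt (Inl (i + 1)), lt (Inr i)] 3) = \<one>\<^bsub>GL2 (n + 1)\<^esub>"
    and "phi_word n (wpow [lt (Inl i), lt (Inl (i + 1)), lt (Inr (i + 1))] 3) = \<one>\<^bsub>GL2 (n + 1)\<^esub>"
    and "phi_word n (wpow [lt (Inl i), lt (Inr i), lt (Inr (i + 1))] 3) = \<one>\<^bsub>GL2 (n + 1)\<^esub>"
    and "phi_word n (wpow [lt (Inl (i + 1)), lt (Inr i), lt (Inr (i + 1))] 3) = \<one>\<^bsub>GL2 (n + 1)\<^esub>"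
    by (simp_all add: wpow_def lt_def A2_gens_def numeral_eq_Suc del: right_mult_one_mat')
      (rule eq_matI; auto simp: algebra_simps)+
qed

lemma phi_word_relators_three_indices:
  assumes "1 \<le> i" "i \<le> n - 2"
  shows "phi_word n (wpow [lt (Inl i), lt (Inl (i + 1)), lt (Inl (i + 2))] 4) = \<one>\<^bsub>GL2 (n + 1)\<^esub>"
    and "phi_word n (wpow [lt (Inr i), lt (Inr (i + 1)), lt (Inr (i + 2))] 4) = \<one>\<^bsub>GL2 (n + 1)\<^esub>"
proof -
  obtain p where "i = Suc p" using assms by (cases i) auto
  with assms show "phi_word n (wpow [lt (Inl i), lt (Inl (i + 1)), lt (Inl (i + 2))] 4) = \<one>\<^bsub>GL2 (n + 1)\<^esub>"
    and "phi_word n (wpow [lt (Inr i), lt (Inr (i + 1)), lt (Inr (i + 2))] 4) = \<one>\<^bsub>GL2 (n + 1)\<^esub>"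
    by (simp_all add: wpow_def lt_def A2_gens_def numeral_eq_Suc del: right_mult_one_mat')
      (rule eq_matI; auto simp: algebra_simps)+
qed

lemma phi_word_A2_relator:
  assumes "r \<in> A2_relators n"
  shows "phi_word n r = \<one>\<^bsub>GL2 (n + 1)\<^esub>"
  using assms unfolding A2_relators_def
  by (elim UnE CollectE exE conjE)
    (simp only:, rule phi_word_square phi_word_commuting_square phi_word_relator_one_index
      phi_word_relators_two_indices phi_word_relators_three_indices; assumption)+

theorem proposition2:
  fixes n :: nat
  assumes "n \<ge> 1"
  shows "\<exists>h. h \<in> hom (A2_group n) (GL2 (n+1)) \<and>
           (\<forall>z \<in> A2_gens n. h (gen_class (A2_gens n) (A2_relators n) z) = phi_gen n z)"
proof -
  interpret GL: group "GL2 (n + 1)" by (rule GL2_group)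
  have "phi_gen n ` A2_gens n \<subseteq> carrier (GL2 (n + 1))" using phi_gen_in_GL2 by blast
  from GL.presented_group_hom_exists[OF this phi_word_A2_relator]
  show ?thesis unfolding A2_group_def .
qed

end
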